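(* Let $M_{\mathbf a}$ be a Brieskorn manifold of dimension $5$ or $7$ (i.e. $n=3$ or $n=4$) with all exponents $a_j\ge 2$, whose natural Sasakian structure is regular and positive. Then, up to reordering of the coordinates, (1) if $n=3$: $\mathbf a\in\{(2,2,2,2),(3,3,3,3),(4,4,4,2),(6,6,3,2)\}$; (2) if $n=4$: $\mathbf a\in\{(2,2,2,2,2),(3,3,3,3,3),(4,4,4,4,4),(4,4,4,4,2),(6,6,6,6,2),(6,6,6,3,2)\}$.
   Context: For a degree $d$, weight vector $\mathbf w=(w_0,\dots,w_n)\in(\mathbb Z^+)^{n+1}$ and exponents $a_i=d/w_i\in\mathbb Z^+$, the Brieskorn–Pham polynomial is $f_{\mathbf a}(\mathbf z)=z_0^{a_0}+\dots+z_n^{a_n}$ and the Brieskorn manifold is $M_{\mathbf a}=\{f_{\mathbf a}=0\}\cap S^{2n+1}\subset\mathbb C^{n+1}$, of dimension $2n-1$. It carries a natural Sasakian structure whose Reeb field generates the weighted circle action $\lambda\cdot\mathbf z=(\lambda^{w_0}z_0,\dots,\lambda^{w_n}z_n)$. This structure is regular if and only if the weights $w_j$ are pairwise relatively prime, and it is positive if and only if $|\mathbf w|-d>0$, where $|\mathbf w|=\sum_jw_j$. *)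

theory Defs
  imports Main "HOL-Library.Multiset"
begin

text \<open>Brieskorn--Pham data in n+1 variables: degree d, weights w, exponents a,
  all as lists of length n+1, with w_j positive and a_j = d / w_j, i.e. a_j * w_j = d.\<close>
definition bp_data :: "nat \<Rightarrow> nat \<Rightarrow> nat list \<Rightarrow> nat list \<Rightarrow> bool" where
  "bp_data n d w a \<longleftrightarrow> length w = n + 1 \<and> length a = n + 1 \<and>
     (\<forall>j < n + 1. 0 < w ! j \<and> a ! j * w ! j = d)"

definition sasaki_regular :: "nat list \<Rightarrow> bool" where
  "sasaki_regular w \<longleftrightarrow>
     (\<forall>i < length w. \<forall>j < length w. i \<noteq> j \<longrightarrow> coprime (w ! i) (w ! j))"

definition sasaki_positive :: "nat \<Rightarrow> nat list \<Rightarrow> bool" where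
  "sasaki_positive d w \<longleftrightarrow> int (sum_list w) - int d > 0"

end

theory Submission
  imports Defs
begin

(* Pairwise coprime weights all divide d, so their product does too.  For a weight x
   with q the product of the other n weights this gives x q <= d < x + (sum of the others)
   <= x + q + n - 1, because a sum of positive integers exceeds their product by less than
   their number; together with 2 x <= d (from a_x >= 2) and n <= 4 this forces x <= 3.
   Coprimality lets 2 and 3 occur at most once, so the weights are ones plus possibly
   a 2 and a 3, and the few remaining possibilities for the weights and d are enumerated. *)

(* W - {#x#} drops a single occurrence, so repeated entries must be coprime to each other:
   only 1 may repeat *)
definition pairwise_coprime_mset :: "nat multiset \<Rightarrow> bool" where
  "pairwise_coprime_mset W \<longleftrightarrow> (\<forall>x \<in># W. \<forall>y \<in># W - {#x#}. coprime x y)"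

lemma pairwise_coprime_mset_empty [simp]: "pairwise_coprime_mset {#}"
  by (simp add: pairwise_coprime_mset_def)

lemma pairwise_coprime_mset_add_mset:
  "pairwise_coprime_mset (add_mset x W) \<longleftrightarrow> (\<forall>y \<in># W. coprime x y) \<and> pairwise_coprime_mset W"
proof
  assume pc: "pairwise_coprime_mset (add_mset x W)"
  then have "\<forall>y \<in># W. coprime x y"
    by (simp add: pairwise_coprime_mset_def)
  moreover have "coprime a b" if "a \<in># W" "b \<in># W - {#a#}" for a b
    using pc that unfolding pairwise_coprime_mset_def by simp
  ultimately show "(\<forall>y \<in># W. coprime x y) \<and> pairwise_coprime_mset W"
    by (simp add: pairwise_coprime_mset_def)
next
  assume "(\<forall>y \<in># W. coprime x y) \<and> pairwise_coprime_mset W"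
  then have x: "\<forall>y \<in># W. coprime x y" and W: "pairwise_coprime_mset W"
    by blast+
  have "coprime a b" if a: "a \<in># add_mset x W" and b: "b \<in># add_mset x W - {#a#}" for a b
  proof (cases "a = x")
    case True
    then show ?thesis
      using x b by simp
  next
    case False
    then have "a \<in># W"
      using a by simp
    then have "b = x \<or> b \<in># W - {#a#}"
      using b by simp
    then show ?thesis
      using x W \<open>a \<in># W\<close> by (auto simp: pairwise_coprime_mset_def coprime_commute)
  qed
  then show "pairwise_coprime_mset (add_mset x W)"
    by (simp add: pairwise_coprime_mset_def)
qed

lemma sasaki_regular_Cons:
  "sasaki_regular (x # xs) \<longleftrightarrow> (\<forall>y \<in> set xs. coprime x y) \<and> sasaki_regular xs"
proof
  assume reg: "sasaki_regular (x # xs)"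
  have "coprime x (xs ! j)" if "j < length xs" for j
    using reg that unfolding sasaki_regular_def
    by (metis Suc_less_eq length_Cons nat.distinct(1) nth_Cons_0 nth_Cons_Suc zero_less_Suc)
  moreover have "sasaki_regular xs"
    using reg unfolding sasaki_regular_def
    by (metis Suc_less_eq length_Cons nat.inject nth_Cons_Suc)
  ultimately show "(\<forall>y \<in> set xs. coprime x y) \<and> sasaki_regular xs"
    by (auto simp: in_set_conv_nth)
next
  assume "(\<forall>y \<in> set xs. coprime x y) \<and> sasaki_regular xs"
  then show "sasaki_regular (x # xs)"
    unfolding sasaki_regular_def by (auto simp: nth_Cons' coprime_commute)
qed

lemma pairwise_coprime_mset_iff_sasaki_regular:
  "pairwise_coprime_mset (mset w) \<longleftrightarrow> sasaki_regular w"
  by (induction w)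
    (simp add: sasaki_regular_def, simp add: pairwise_coprime_mset_add_mset sasaki_regular_Cons)

lemma coprime_prod_mset_right:
  fixes x :: "'a::semiring_gcd"
  shows "\<forall>y \<in># W. coprime x y \<Longrightarrow> coprime x (prod_mset W)"
  by (induction W) simp_all

lemma prod_mset_dvd_if_pairwise_coprime:
  assumes "pairwise_coprime_mset W" and "\<forall>x \<in># W. x dvd d"
  shows "prod_mset W dvd d"
  using assms
proof (induction W)
  case empty
  then show ?case by simp
next
  case (add x W)
  then have "coprime x (prod_mset W)" and "prod_mset W dvd d"
    by (simp_all add: pairwise_coprime_mset_add_mset coprime_prod_mset_right)
  then show ?case
    using add.prems(2) by (simp add: divides_mult)
qed

lemma count_le_1_if_pairwise_coprime:
  assumes "pairwise_coprime_mset W" and "x \<noteq> 1"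
  shows "count W x \<le> 1"
proof (rule ccontr)
  assume "\<not> count W x \<le> 1"
  then have "x \<in># W" and "x \<in># W - {#x#}"
    by (simp_all add: count_greater_zero_iff[symmetric] del: count_greater_zero_iff)
  then have "coprime x x"
    using assms(1) unfolding pairwise_coprime_mset_def by blast
  then show False
    using assms(2) by simp
qed

lemma sum_mset_le_prod_mset:
  fixes M :: "nat multiset"
  assumes "\<forall>x \<in># M. 0 < x"
  shows "sum_mset M + 1 \<le> prod_mset M + size M"
  using assms
proof (induction M)
  case empty
  then show ?case by simp
next
  case (add x M)
  have "0 < x" and "prod_mset M \<noteq> 0"
    using add.prems by auto
  then have "x + prod_mset M \<le> x * prod_mset M + 1"
    by (cases x; cases "prod_mset M") simp_all
  then show ?case
    using add by simp
qed

lemma coprime_factor_le_3: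
  fixes x q d :: nat
  assumes "x * q \<le> d" and "2 * x \<le> d" and "d < x + q + 3"
    and "coprime x q" and "0 < q"
  shows "x \<le> 3"
proof (rule ccontr)
  assume "\<not> x \<le> 3"
  then obtain u where x: "x = 4 + u"
    using le_Suc_ex[of 4 x] by auto
  consider "q = 1" | "q = 2" | "3 \<le> q"
    using \<open>0 < q\<close> by linarith
  then show False
  proof cases
    case 1
    then show False
      using assms(2,3) x by linarith
  next
    case 2
    then have "x = 4"
      using assms(2,3) x by linarith
    then show False
      using assms(4) 2 by simp
  next
    case 3
    then obtain v where q: "q = 3 + v"
      using le_Suc_ex by blast
    have "x * q = 12 + 4 * v + 3 * u + u * v"
      unfolding x q by (simp add: algebra_simps)
    then show False
      using assms(1,3) x q by linarith
  qed
qed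

lemma pairwise_coprime_weight_le_3:
  assumes pc: "pairwise_coprime_mset W" and size: "size W \<le> 5"
    and weights: "\<forall>y \<in># W. 0 < y \<and> y dvd d \<and> 2 * y \<le> d"
    and positive: "d < sum_mset W" and "x \<in># W"
  shows "x \<le> 3"
proof -
  obtain R where W: "W = add_mset x R"
    using \<open>x \<in># W\<close> by (metis mset_add)
  define q where "q = prod_mset R"
  have "0 < x" and "2 * x \<le> d"
    using weights \<open>x \<in># W\<close> by auto
  have "x * q dvd d"
    using prod_mset_dvd_if_pairwise_coprime[OF pc] weights W by (simp add: q_def)
  then have "x * q \<le> d"
    using \<open>0 < x\<close> \<open>2 * x \<le> d\<close> by (intro dvd_imp_le) auto
  have "sum_mset R + 1 \<le> q + size R"
    using sum_mset_le_prod_mset weights W by (simp add: q_def)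
  then have "d < x + q + 3"
    using positive size W by simp
  have "coprime x q"
    using pc W by (simp add: q_def pairwise_coprime_mset_add_mset coprime_prod_mset_right)
  have "0 \<notin># R"
    using weights W by auto
  then have "0 < q"
    by (simp add: q_def zero_less_iff_neq_zero)
  show ?thesis
    by (rule coprime_factor_le_3) fact+
qed

lemma mset_eq_replicate_1_2_3:
  fixes W :: "nat multiset"
  assumes "set_mset W \<subseteq> {1, 2, 3}"
  shows "W = replicate_mset (count W 1) 1 + replicate_mset (count W 2) 2
           + replicate_mset (count W 3) 3"
proof (rule multiset_eqI)
  fix x
  show "count W x = count (replicate_mset (count W 1) 1 + replicate_mset (count W 2) 2
                             + replicate_mset (count W 3) 3) x"
    using assms by (cases "x \<in> {1, 2, 3}") (auto simp: count_eq_zero_iff)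
qed

lemma replicate_mset_numeral:
  "replicate_mset (numeral n) x = add_mset x (replicate_mset (pred_numeral n) x)"
  by (simp add: numeral_eq_Suc)

(* k, i, j count the weights 1, 2, 3 *)
lemma weight_counts_table:
  fixes k i j d :: nat
  assumes "i \<le> 1" "j \<le> 1" "k + i + j = 4 \<or> k + i + j = 5" "2 ^ i * 3 ^ j dvd d"
    "0 < k \<longrightarrow> 2 * 1 \<le> d" "0 < i \<longrightarrow> 2 * 2 \<le> d" "0 < j \<longrightarrow> 2 * 3 \<le> d"
    "d < k + 2 * i + 3 * j"
  shows "(k, i, j, d) \<in> {(4,0,0,2), (4,0,0,3), (3,1,0,4), (2,1,1,6),
           (5,0,0,2), (5,0,0,3), (5,0,0,4), (4,1,0,4), (4,0,1,6), (3,1,1,6)}"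
proof -
  have "i = 0 \<or> i = 1" "j = 0 \<or> j = 1"
    using assms(1,2) by auto
  moreover have "d = 2 \<or> d = 3 \<or> d = 4 \<or> d = 5 \<or> d = 6 \<or> d = 7"
    using assms(1-3,5,8) by arith
  ultimately show ?thesis
    using assms(3,4,6-8) by (elim disjE) simp_all
qed

lemma exponents_of_weight_counts:
  fixes k i j d n :: nat
  assumes "(k, i, j, d) \<in> {(4,0,0,2), (4,0,0,3), (3,1,0,4), (2,1,1,6),
             (5,0,0,2), (5,0,0,3), (5,0,0,4), (4,1,0,4), (4,0,1,6), (3,1,1,6)}"
    and "k + i + j = n + 1"
  defines "A \<equiv> replicate_mset k d + replicate_mset i (d div 2) + replicate_mset j (d div 3)"
  shows "(n = 3 \<longrightarrow> A \<in> {mset [2,2,2,2], mset [3,3,3,3], mset [4,4,4,2], mset [6,6,3,2]})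
       \<and> (n = 4 \<longrightarrow> A \<in> {mset [2,2,2,2,2], mset [3,3,3,3,3], mset [4,4,4,4,4],
                                mset [4,4,4,4,2], mset [6,6,6,6,2], mset [6,6,6,3,2]})"
  using assms(1,2) unfolding A_def by (auto simp: replicate_mset_numeral add_mset_commute)

lemma exponents_classification:
  fixes W :: "nat multiset" and n d :: nat
  assumes n: "n = 3 \<or> n = 4" and size: "size W = n + 1"
    and pc: "pairwise_coprime_mset W"
    and weights: "\<forall>x \<in># W. 0 < x \<and> x dvd d \<and> 2 * x \<le> d"
    and positive: "d < sum_mset W"
  shows "(n = 3 \<longrightarrow> image_mset (\<lambda>x. d div x) W \<in> {mset [2,2,2,2], mset [3,3,3,3], mset [4,4,4,2], mset [6,6,3,2]})
       \<and> (n = 4 \<longrightarrow> image_mset (\<lambda>x. d div x) W \<in> {mset [2,2,2,2,2], mset [3,3,3,3,3], mset [4,4,4,4,4],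
                                mset [4,4,4,4,2], mset [6,6,6,6,2], mset [6,6,6,3,2]})"
proof -
  define k i j where "k = count W 1" and "i = count W 2" and "j = count W 3"
  have "set_mset W \<subseteq> {1, 2, 3}"
  proof
    fix x assume "x \<in># W"
    then have "0 < x" and "x \<le> 3"
      using weights pairwise_coprime_weight_le_3[OF pc _ weights positive] n size by auto
    then show "x \<in> {1, 2, 3}"
      by auto
  qed
  then have W: "W = replicate_mset k 1 + replicate_mset i 2 + replicate_mset j 3"
    unfolding k_def i_def j_def by (rule mset_eq_replicate_1_2_3)
  have sizes: "k + i + j = n + 1"
    using size by (simp add: W)
  have "prod_mset W dvd d"
    using prod_mset_dvd_if_pairwise_coprime[OF pc] weights by blast
  have twice_le: "0 < count W x \<longrightarrow> 2 * x \<le> d" for x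
    using weights by simp
  have "(k, i, j, d) \<in> {(4,0,0,2), (4,0,0,3), (3,1,0,4), (2,1,1,6),
           (5,0,0,2), (5,0,0,3), (5,0,0,4), (4,1,0,4), (4,0,1,6), (3,1,1,6)}"
  proof (rule weight_counts_table)
    show "i \<le> 1" "j \<le> 1"
      unfolding i_def j_def using count_le_1_if_pairwise_coprime[OF pc] by simp_all
    show "k + i + j = 4 \<or> k + i + j = 5"
      using n sizes by auto
    show "2 ^ i * 3 ^ j dvd d"
      using \<open>prod_mset W dvd d\<close> by (simp add: W)
    show "0 < k \<longrightarrow> 2 * 1 \<le> d" "0 < i \<longrightarrow> 2 * 2 \<le> d" "0 < j \<longrightarrow> 2 * 3 \<le> d"
      unfolding k_def i_def j_def by (fact twice_le)+
    show "d < k + 2 * i + 3 * j"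
      using positive by (simp add: W)
  qed
  moreover have "image_mset (\<lambda>x. d div x) W
      = replicate_mset k d + replicate_mset i (d div 2) + replicate_mset j (d div 3)"
    by (simp add: W)
  ultimately show ?thesis
    using exponents_of_weight_counts[OF _ sizes] by simp
qed

lemma bp_data_exponents:
  assumes "bp_data n d w a"
  shows "a = map (\<lambda>x. d div x) w"
proof (rule nth_equalityI)
  show "length a = length (map (\<lambda>x. d div x) w)"
    using assms by (simp add: bp_data_def)
  fix j assume "j < length a"
  then have "j < length w" "0 < w ! j" "a ! j * w ! j = d"
    using assms by (auto simp: bp_data_def)
  then show "a ! j = map (\<lambda>x. d div x) w ! j"
    by auto
qed

lemma bp_data_weights:
  assumes "bp_data n d w a" and "\<forall>j < n + 1. a ! j \<ge> 2" and "x \<in> set w"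
  shows "0 < x \<and> x dvd d \<and> 2 * x \<le> d"
proof -
  obtain j where j: "j < n + 1" "x = w ! j"
    using assms(1,3) unfolding bp_data_def by (metis in_set_conv_nth)
  then have "0 < x" "a ! j * x = d" "2 \<le> a ! j"
    using assms(1,2) unfolding bp_data_def by auto
  then show ?thesis
    by (metis dvd_triv_right mult_le_mono1)
qed

theorem proposition3p13:
  fixes n d :: nat and w a :: "nat list"
  assumes "n = 3 \<or> n = 4"
    and "bp_data n d w a"
    and "\<forall>j < n + 1. a ! j \<ge> 2"
    and "sasaki_regular w"
    and "sasaki_positive d w"
  shows "(n = 3 \<longrightarrow> mset a \<in> {mset [2,2,2,2], mset [3,3,3,3], mset [4,4,4,2], mset [6,6,3,2]})
       \<and> (n = 4 \<longrightarrow> mset a \<in> {mset [2,2,2,2,2], mset [3,3,3,3,3], mset [4,4,4,4,4],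
                                mset [4,4,4,4,2], mset [6,6,6,6,2], mset [6,6,6,3,2]})"
proof -
  have "mset a = image_mset (\<lambda>x. d div x) (mset w)"
    using bp_data_exponents[OF assms(2)] by simp
  moreover have "size (mset w) = n + 1"
    using assms(2) by (simp add: bp_data_def)
  moreover have "pairwise_coprime_mset (mset w)"
    using assms(4) by (simp add: pairwise_coprime_mset_iff_sasaki_regular)
  moreover have "\<forall>x \<in># mset w. 0 < x \<and> x dvd d \<and> 2 * x \<le> d"
    using bp_data_weights[OF assms(2,3)] by simp
  moreover have "d < sum_mset (mset w)"
    using assms(5) by (simp add: sasaki_positive_def sum_mset_sum_list)
  ultimately show ?thesis
    using exponents_classification[OF assms(1)] by simp
qed

end
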